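(* Let $n\ge 2$ objects be auctioned to two bidders ${\mathcal B}$ and ${\mathcal A}$ in the simultaneous sealed-bid multiple-object auction described in the context. Suppose ${\mathcal B}$ uses the following randomized bidding algorithm to produce his bids $b_1,\dots,b_n$. Let $s(v)=\frac{81}{2}\cdot\frac{v}{2-3v}$ and let $h(x,y,z)=s(|x-y|+|y-z|+|z-x|)$ on $[0,\tfrac13]^3$, viewed as a probability density function on $[0,\tfrac13]^3$. Let $F_2$ denote the uniform distribution on $[0,\frac{2}{n}]$. Case 1: $n=2m$ is even. Draw $b_1$ from $F_2$ and set $b_i=b_1$ and $b_{m+i}=\frac{2}{n}-b_1$ for $i=1,\dots,m$. Case 2: $n=2m+1$ is odd. Draw $b_1$ from $F_2$ and set $b_i=b_1$ and $b_{m-1+i}=\frac{2}{n}-b_1$ for $i=1,\dots,m-1$. Independently draw $(x,y,z)$ with density $h$ and set $b_{2m-1}=\frac{3}{n}(x-y+\frac13)$, $b_{2m}=\frac{3}{n}(y-z+\frac13)$, $b_{2m+1}=\frac{3}{n}(z-x+\frac13)$. Then for every (possibly randomized) bidding strategy of ${\mathcal A}$ (chosen with knowledge of this algorithm but independently of ${\mathcal B}$'s random choices), the expected number of objects won by ${\mathcal B}$ is at least $n/2$. Moreover this is optimal: for every bidding algorithm of ${\mathcal B}$, ${\mathcal A}$ has a strategy under which the expected number of objects won by ${\mathcal B}$ is at most $n/2$.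
   Context: Auction model: $n$ objects are auctioned simultaneously. Each bidder has a total budget normalized to $1$ and submits, simultaneously with the other bidders, a vector of bids (one bid for each object, positive real numbers) whose sum is at most $1$. Each object is won by the bidder with the highest bid on it, who pays that bid; if $m$ bidders tie for the highest bid on an object, each wins it with probability $1/m$. Each bidder wants to maximize the expected number of objects he wins. A randomized bidding algorithm is a procedure producing a random bid vector. The adversary ${\mathcal A}$ knows ${\mathcal B}$'s bidding algorithm (but not the outcomes of ${\mathcal B}$'s random choices); ${\mathcal B}$ does not know ${\mathcal A}$'s algorithm. *)

theory Defs
  imports "HOL-Probability.Probability"
begin

text \<open>Objects are indexed 0,...,n-1 (object k+1 of the paper is index k).
  A bid vector is an element of the product space of n real lines.\<close>

definition bid_space :: "nat \<Rightarrow> (nat \<Rightarrow> real) measure" where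
  "bid_space n = PiM {..<n} (\<lambda>_. borel)"

definition valid_bid :: "nat \<Rightarrow> (nat \<Rightarrow> real) \<Rightarrow> bool" where
  "valid_bid n b \<longleftrightarrow> (\<forall>i<n. b i > 0) \<and> (\<Sum>i<n. b i) \<le> 1"

text \<open>A randomized bidding algorithm = the probability distribution of the random bid
  vector it produces; it must (almost surely) produce admissible bid vectors.\<close>
definition rand_strategy :: "nat \<Rightarrow> (nat \<Rightarrow> real) measure \<Rightarrow> bool" where
  "rand_strategy n M \<longleftrightarrow> sets M = sets (bid_space n) \<and> prob_space M \<and>
     (AE b in M. valid_bid n b)"

text \<open>Expected share of one object won by the bidder bidding x against bid y
  (ties broken uniformly at random).\<close>
definition win :: "real \<Rightarrow> real \<Rightarrow> real" where
  "win x y = (if x > y then 1 else if x = y then 1/2 else 0)"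

definition exp_wins :: "nat \<Rightarrow> (nat \<Rightarrow> real) measure \<Rightarrow> (nat \<Rightarrow> real) measure \<Rightarrow> real" where
  "exp_wins n MB MA = integral\<^sup>L (MB \<Otimes>\<^sub>M MA) (\<lambda>(b, a). \<Sum>i<n. win (b i) (a i))"

definition s_fun :: "real \<Rightarrow> real" where
  "s_fun v = (81 / 2) * (v / (2 - 3 * v))"

definition h_fun :: "real \<times> real \<times> real \<Rightarrow> real" where
  "h_fun p = (case p of (x,y,z) \<Rightarrow> s_fun (\<bar>x - y\<bar> + \<bar>y - z\<bar> + \<bar>z - x\<bar>))"

definition cube3 :: "(real \<times> real \<times> real) set" where
  "cube3 = {(x,y,z). 0 \<le> x \<and> x \<le> 1/3 \<and> 0 \<le> y \<and> y \<le> 1/3 \<and> 0 \<le> z \<and> z \<le> 1/3}"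

definition h_measure :: "(real \<times> real \<times> real) measure" where
  "h_measure = density lborel (\<lambda>p. indicator cube3 p * ennreal (h_fun p))"

definition F2 :: "nat \<Rightarrow> real measure" where
  "F2 n = uniform_measure lborel {0 .. 2 / real n}"

definition alg_B :: "nat \<Rightarrow> (nat \<Rightarrow> real) measure" where
  "alg_B n = (if even n then
      distr (F2 n) (bid_space n)
        (\<lambda>t. \<lambda>i\<in>{..<n}. if i < n div 2 then t else 2 / real n - t)
    else
      distr (F2 n \<Otimes>\<^sub>M h_measure) (bid_space n)
        (\<lambda>(t, x, y, z). \<lambda>i\<in>{..<n}.
           if i < n div 2 - 1 then t
           else if i < 2 * (n div 2) - 2 then 2 / real n - t
           else if i = 2 * (n div 2) - 2 then 3 / real n * (x - y + 1/3)
           else if i = 2 * (n div 2) - 1 then 3 / real n * (y - z + 1/3)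
           else 3 / real n * (z - x + 1/3)))"

end

theory Submission
  imports Defs
begin

text \<open>Every bid of \<open>alg_B n\<close> is uniformly distributed on \<open>[0, 2/n]\<close>, and the bids always sum to 1.
  For the paired bids this is immediate; for the three bids built from \<open>(x, y, z)\<close> it holds because
  under the density \<open>h\<close> each of the differences \<open>x - y\<close>, \<open>y - z\<close>, \<open>z - x\<close> is uniform on
  \<open>(-1/3, 1/3)\<close>. Hence B wins object \<open>i\<close> against a bid \<open>a\<^sub>i\<close> with probability at least
  \<open>1 - n a\<^sub>i / 2\<close>, and summing over \<open>i\<close> with \<open>\<Sum> a\<^sub>i \<le> 1\<close> gives at least \<open>n/2\<close>.
  Conversely, A can answer any algorithm with an independent copy of it: by symmetry each bidder
  then wins \<open>n/2\<close> objects in expectation.\<close>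

section \<open>Expected number of objects won\<close>

lemma win_measurable[measurable (raw)]:
  assumes [measurable]: "f \<in> borel_measurable M" "g \<in> borel_measurable M"
  shows "(\<lambda>x. win (f x) (g x)) \<in> borel_measurable M"
  unfolding win_def by measurable

lemma win_nonneg: "0 \<le> win x y"
  by (simp add: win_def)

lemma win_le_1: "win x y \<le> 1"
  by (simp add: win_def)

lemma win_swap: "win y x = 1 - win x y"
  by (auto simp: win_def)

lemma sum_win_swap: "(\<Sum>i<n. win (a i) (b i)) = real n - (\<Sum>i<n. win (b i) (a i))"
  using win_swap[of "b i" "a i" for i] by (simp add: sum_subtractf)

lemma measurable_bid_component:
  assumes "sets M = sets (bid_space n)" "i < n"
  shows "(\<lambda>b. b i) \<in> borel_measurable M"
  using assms by (simp add: measurable_cong_sets[OF assms(1) refl] bid_space_def)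

lemma measurable_sum_win:
  assumes "sets MB = sets (bid_space n)" "sets MA = sets (bid_space n)"
  shows "(\<lambda>(b, a). \<Sum>i<n. win (b i) (a i)) \<in> borel_measurable (MB \<Otimes>\<^sub>M MA)"
proof -
  have "(\<lambda>(b, a). \<Sum>i<n. win (b i) (a i)) \<in> borel_measurable (bid_space n \<Otimes>\<^sub>M bid_space n)"
    unfolding bid_space_def by measurable
  then show ?thesis
    by (subst measurable_cong_sets[OF sets_pair_measure_cong[OF assms] refl])
qed

lemma integrable_sum_win:
  assumes "prob_space MB" "prob_space MA"
    and "sets MB = sets (bid_space n)" "sets MA = sets (bid_space n)"
  shows "integrable (MB \<Otimes>\<^sub>M MA) (\<lambda>(b, a). \<Sum>i<n. win (b i) (a i))"
proof -
  interpret prob_space "MB \<Otimes>\<^sub>M MA"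
    using assms(1,2) by (rule prob_space_pair)
  have "norm (\<Sum>i<n. win (b i) (a i)) \<le> real n" for a b :: "nat \<Rightarrow> real"
    using sum_bounded_above[of "{..<n}" "\<lambda>i. win (b i) (a i)" 1]
    by (simp add: sum_nonneg win_nonneg win_le_1)
  then show ?thesis
    by (intro integrable_const_bound[where B="real n"] measurable_sum_win[OF assms(3,4)]) auto
qed

theorem exp_wins_self:
  assumes "prob_space M" "sets M = sets (bid_space n)"
  shows "exp_wins n M M = real n / 2"
proof -
  interpret pair_prob_space M M
    using assms(1) by (simp add: pair_prob_space_def pair_sigma_finite_def prob_space_imp_sigma_finite)
  let ?f = "\<lambda>(b, a). \<Sum>i<n. win (b i) (a i)"
  have "exp_wins n M M = (\<integral>(b, a). ?f (a, b) \<partial>(M \<Otimes>\<^sub>M M))"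
    unfolding exp_wins_def by (rule integral_product_swap[OF measurable_sum_win[OF assms(2,2)], symmetric])
  also have "\<dots> = (\<integral>p. real n - ?f p \<partial>(M \<Otimes>\<^sub>M M))"
    by (intro Bochner_Integration.integral_cong) (auto split: prod.split intro: sum_win_swap)
  also have "\<dots> = real n - exp_wins n M M"
    unfolding exp_wins_def using integrable_sum_win[OF assms(1,1,2,2)] by (simp add: prob_space)
  finally show ?thesis by simp
qed

text \<open>Each bid stochastically dominates the uniform distribution on \<open>[0, 2/n]\<close>.\<close>
definition bids_dominate_uniform :: "nat \<Rightarrow> (nat \<Rightarrow> real) measure \<Rightarrow> bool" where
  "bids_dominate_uniform n M \<longleftrightarrow>
     (\<forall>i<n. \<forall>c>0. 1 - real n * c / 2 \<le> measure M {b \<in> space M. c < b i})"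

lemma measure_bid_gt_le_integral_win:
  assumes "prob_space M" and [measurable]: "(\<lambda>b. b i) \<in> borel_measurable M"
  shows "measure M {b \<in> space M. c < b i} \<le> (\<integral>b. win (b i) c \<partial>M)"
proof -
  interpret prob_space M by fact
  have "measure M {b \<in> space M. c < b i} = (\<integral>b. indicator {b \<in> space M. c < b i} b \<partial>M)"
    by (simp add: Int_absorb2)
  also have "\<dots> \<le> (\<integral>b. win (b i) c \<partial>M)"
    by (rule integral_mono) (auto intro!: integrable_const_bound[where B=1] simp: win_def indicator_def)
  finally show ?thesis .
qed

lemma expected_wins_against_valid_bid:
  assumes "prob_space MB" "sets MB = sets (bid_space n)" "bids_dominate_uniform n MB"
    and "valid_bid n a"
  shows "real n / 2 \<le> (\<integral>b. (\<Sum>i<n. win (b i) (a i)) \<partial>MB)"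
proof -
  interpret prob_space MB by fact
  note component = measurable_bid_component[OF assms(2)]
  have "real n / 2 \<le> real n - real n / 2 * (\<Sum>i<n. a i)"
    using \<open>valid_bid n a\<close> by (simp add: valid_bid_def mult_left_le)
  also have "\<dots> = (\<Sum>i<n. 1 - real n * a i / 2)"
    by (simp add: sum_subtractf sum_distrib_left)
  also have "\<dots> \<le> (\<Sum>i<n. \<integral>b. win (b i) (a i) \<partial>MB)"
  proof (rule sum_mono)
    fix i assume "i \<in> {..<n}"
    then show "1 - real n * a i / 2 \<le> (\<integral>b. win (b i) (a i) \<partial>MB)"
      using assms(3,4) measure_bid_gt_le_integral_win[OF assms(1) component]
      unfolding bids_dominate_uniform_def valid_bid_def by (meson lessThan_iff order_trans)
  qed
  also have "\<dots> = (\<integral>b. (\<Sum>i<n. win (b i) (a i)) \<partial>MB)"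
    by (rule Bochner_Integration.integral_sum[symmetric])
      (auto intro!: integrable_const_bound[where B=1] win_measurable component simp: win_nonneg win_le_1)
  finally show ?thesis .
qed

theorem exp_wins_ge_half:
  assumes "prob_space MB" "sets MB = sets (bid_space n)" "bids_dominate_uniform n MB"
    and "prob_space MA" "sets MA = sets (bid_space n)" "AE a in MA. valid_bid n a"
  shows "real n / 2 \<le> exp_wins n MB MA"
proof -
  interpret pair_prob_space MB MA
    using assms(1,4) by (simp add: pair_prob_space_def pair_sigma_finite_def prob_space_imp_sigma_finite)
  have int: "integrable (MB \<Otimes>\<^sub>M MA) (\<lambda>(b, a). \<Sum>i<n. win (b i) (a i))"
    using integrable_sum_win[OF assms(1,4,2,5)] .
  have "real n / 2 = (\<integral>a. real n / 2 \<partial>MA)"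
    by (simp add: M2.prob_space)
  also have "\<dots> \<le> (\<integral>a. (\<integral>b. (\<Sum>i<n. win (b i) (a i)) \<partial>MB) \<partial>MA)"
  proof (rule integral_mono_AE)
    show "AE a in MA. real n / 2 \<le> (\<integral>b. (\<Sum>i<n. win (b i) (a i)) \<partial>MB)"
      using assms(6) by eventually_elim (rule expected_wins_against_valid_bid[OF assms(1-3)])
  qed (use integrable_snd[OF int] in simp_all)
  also have "\<dots> = exp_wins n MB MA"
    unfolding exp_wins_def using integral_snd[OF int] by simp
  finally show ?thesis .
qed

lemma sets_F2[measurable_cong]: "sets (F2 n) = sets borel"
  by (simp add: F2_def)

lemma space_F2[simp]: "space (F2 n) = UNIV"
  by (simp add: F2_def)

lemma prob_space_F2: "0 < n \<Longrightarrow> prob_space (F2 n)"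
  unfolding F2_def by (rule prob_space_uniform_measure) auto

lemma measure_F2:
  "0 < n \<Longrightarrow> B \<in> sets borel \<Longrightarrow> measure (F2 n) B = measure lborel ({0..2/real n} \<inter> B) / (2 / real n)"
  unfolding F2_def by (subst measure_uniform_measure) auto

lemma AE_F2: "0 < n \<Longrightarrow> AE t in F2 n. 0 < t \<and> t < 2 / real n"
  unfolding F2_def
proof (rule AE_uniform_measureI)
  show "AE t in lborel. t \<in> {0..2 / real n} \<longrightarrow> 0 < t \<and> t < 2 / real n"
    using AE_lborel_singleton[of 0] AE_lborel_singleton[of "2 / real n"] by eventually_elim auto
qed simp

lemma F2_gt:
  assumes "0 < n" "0 < c"
  shows "1 - real n * c / 2 \<le> measure (F2 n) {t. c < t}"
proof (cases "c < 2 / real n")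
  case True
  have "{0..2/real n} \<inter> {t. c < t} = {c<..2/real n}"
    using assms by auto
  then have "measure (F2 n) {t. c < t} = (2/real n - c) / (2 / real n)"
    using measure_F2[OF assms(1), of "{t. c < t}"] True by simp
  also have "\<dots> = 1 - real n * c / 2"
    using assms by (simp add: field_simps)
  finally show ?thesis by simp
next
  case False
  then have "1 - real n * c / 2 \<le> 0"
    using assms by (simp add: field_simps)
  then show ?thesis by (meson measure_nonneg order_trans)
qed

lemma F2_reflect_gt:
  assumes "0 < n" "0 < c"
  shows "1 - real n * c / 2 \<le> measure (F2 n) {t. c < 2 / real n - t}"
proof (cases "c < 2 / real n")
  case True
  have "{0..2/real n} \<inter> {t. c < 2 / real n - t} = {0..<2/real n - c}"
    using assms by auto
  then have "measure (F2 n) {t. c < 2 / real n - t} = (2/real n - c) / (2 / real n)"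
    using measure_F2[OF assms(1), of "{t. c < 2 / real n - t}"] True by simp
  also have "\<dots> = 1 - real n * c / 2"
    using assms by (simp add: field_simps)
  finally show ?thesis by simp
next
  case False
  then have "1 - real n * c / 2 \<le> 0"
    using assms by (simp add: field_simps)
  then show ?thesis by (meson measure_nonneg order_trans)
qed

section \<open>Iterated Lebesgue integrals on \<open>\<real>\<^sup>3\<close>\<close>

lemma pred_greaterThanAtMost[measurable]:
  fixes f g h :: "'a \<Rightarrow> real"
  assumes [measurable]: "f \<in> borel_measurable M" "g \<in> borel_measurable M" "h \<in> borel_measurable M"
  shows "Measurable.pred M (\<lambda>x. f x \<in> {g x<..h x})"
  by (simp add: greaterThanAtMost_iff) measurable

lemma pred_atLeastLessThan[measurable]:
  fixes f g h :: "'a \<Rightarrow> real"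
  assumes [measurable]: "f \<in> borel_measurable M" "g \<in> borel_measurable M" "h \<in> borel_measurable M"
  shows "Measurable.pred M (\<lambda>x. f x \<in> {g x..<h x})"
  by (simp add: atLeastLessThan_iff) measurable

lemma pred_atLeastAtMost[measurable]:
  fixes f g h :: "'a \<Rightarrow> real"
  assumes [measurable]: "f \<in> borel_measurable M" "g \<in> borel_measurable M" "h \<in> borel_measurable M"
  shows "Measurable.pred M (\<lambda>x. f x \<in> {g x..h x})"
  by (simp add: atLeastAtMost_iff) measurable

lemma nn_integral_lborel_pair:
  fixes F :: "'a::euclidean_space \<times> 'b::euclidean_space \<Rightarrow> ennreal"
  assumes "F \<in> borel_measurable borel"
  shows "(\<integral>\<^sup>+p. F p \<partial>lborel) = (\<integral>\<^sup>+x. \<integral>\<^sup>+y. F (x, y) \<partial>lborel \<partial>lborel)"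
  by (subst lborel.nn_integral_fst) (simp_all add: lborel_prod assms)

lemma nn_integral_lborel_triple:
  fixes F :: "real \<times> real \<times> real \<Rightarrow> ennreal"
  assumes [measurable]: "F \<in> borel_measurable borel"
  shows "(\<integral>\<^sup>+p. F p \<partial>lborel) = (\<integral>\<^sup>+x. \<integral>\<^sup>+y. \<integral>\<^sup>+z. F (x, y, z) \<partial>lborel \<partial>lborel \<partial>lborel)"
proof -
  have "(\<integral>\<^sup>+p. F p \<partial>lborel) = (\<integral>\<^sup>+x. \<integral>\<^sup>+q. F (x, q) \<partial>lborel \<partial>lborel)"
    by (rule nn_integral_lborel_pair) simp
  also have "\<dots> = (\<integral>\<^sup>+x. \<integral>\<^sup>+y. \<integral>\<^sup>+z. F (x, y, z) \<partial>lborel \<partial>lborel \<partial>lborel)"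
    by (rule nn_integral_cong, rule nn_integral_lborel_pair) measurable
  finally show ?thesis .
qed

lemma nn_integral_lborel_swap:
  fixes f :: "real \<Rightarrow> real \<Rightarrow> ennreal"
  assumes "(\<lambda>(x, y). f x y) \<in> borel_measurable (borel \<Otimes>\<^sub>M borel)"
  shows "(\<integral>\<^sup>+x. \<integral>\<^sup>+y. f x y \<partial>lborel \<partial>lborel) = (\<integral>\<^sup>+y. \<integral>\<^sup>+x. f x y \<partial>lborel \<partial>lborel)"
  using assms
  by (intro lborel_pair.Fubini'[symmetric])
    (simp add: measurable_cong_sets[OF sets_pair_measure_cong[OF sets_lborel sets_lborel] refl])

lemma nn_integral_lborel_triple_swap12:
  fixes F :: "real \<times> real \<times> real \<Rightarrow> ennreal"
  assumes [measurable]: "F \<in> borel_measurable (borel \<Otimes>\<^sub>M (borel \<Otimes>\<^sub>M borel))"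
  shows "(\<integral>\<^sup>+x. \<integral>\<^sup>+y. \<integral>\<^sup>+z. F (x, y, z) \<partial>lborel \<partial>lborel \<partial>lborel)
       = (\<integral>\<^sup>+y. \<integral>\<^sup>+x. \<integral>\<^sup>+z. F (x, y, z) \<partial>lborel \<partial>lborel \<partial>lborel)"
  by (rule nn_integral_lborel_swap) measurable

lemma nn_integral_lborel_triple_swap23:
  fixes F :: "real \<times> real \<times> real \<Rightarrow> ennreal"
  assumes [measurable]: "F \<in> borel_measurable (borel \<Otimes>\<^sub>M (borel \<Otimes>\<^sub>M borel))"
  shows "(\<integral>\<^sup>+x. \<integral>\<^sup>+y. \<integral>\<^sup>+z. F (x, y, z) \<partial>lborel \<partial>lborel \<partial>lborel)
       = (\<integral>\<^sup>+x. \<integral>\<^sup>+z. \<integral>\<^sup>+y. F (x, y, z) \<partial>lborel \<partial>lborel \<partial>lborel)"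
  by (rule nn_integral_cong, rule nn_integral_lborel_swap) measurable

section \<open>The density \<open>h\<close>\<close>

text \<open>The perimeter \<open>|x - y| + |y - z| + |z - x|\<close> is twice the range \<open>max - min\<close> of \<open>x, y, z\<close>,
  so \<open>h\<close> is \<open>range_dens\<close> of the range.\<close>
definition range_dens :: "real \<Rightarrow> real" where
  "range_dens r = 27/2 * r / (1/3 - r)"

lemma borel_measurable_range_dens[measurable]: "range_dens \<in> borel_measurable borel"
  unfolding range_dens_def by measurable

lemma s_fun_double: "s_fun (2 * r) = range_dens r"
proof (cases "r = 1/3")
  case False
  then have "2 - 3 * (2 * r) \<noteq> 0" "1/3 - r \<noteq> 0" by auto
  then show ?thesis unfolding s_fun_def range_dens_def by (simp add: field_simps)
next
  case True
  then show ?thesis by (simp only: True) (simp add: s_fun_def range_dens_def)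
qed

lemma range_dens_nonneg: "0 \<le> r \<Longrightarrow> r < 1/3 \<Longrightarrow> 0 \<le> range_dens r"
  unfolding range_dens_def by simp

lemma range_dens_mult: "r < 1/3 \<Longrightarrow> range_dens r * (1/3 - r) = 27/2 * r"
  unfolding range_dens_def by (simp add: field_simps)

text \<open>The \<open>y\<close>-section at \<open>r\<close> has length \<open>1/3 - r\<close>, which cancels the pole of \<open>range_dens\<close>.\<close>
lemma nn_integral_range_dens:
  assumes "0 \<le> u" "u < 1/3"
  shows "(\<integral>\<^sup>+r. \<integral>\<^sup>+y. ennreal (range_dens r) * indicator {u<..} r * indicator {r-u..1/3-u} y \<partial>lborel \<partial>lborel)
       = ennreal (27/4 * ((1/3)\<^sup>2 - u\<^sup>2))"
proof -
  have inner: "(\<integral>\<^sup>+y. ennreal (range_dens r) * indicator {u<..} r * indicator {r-u..1/3-u} y \<partial>lborel)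
      = ennreal (27/2 * r) * indicator {u..1/3} r" if "r \<noteq> u" "r \<noteq> 1/3" for r
  proof -
    have "(\<integral>\<^sup>+y. ennreal (range_dens r) * indicator {u<..} r * indicator {r-u..1/3-u} y \<partial>lborel)
        = ennreal (range_dens r) * indicator {u<..} r * ennreal (if r \<le> 1/3 then 1/3 - r else 0)"
      by (subst nn_integral_cmult_indicator) (auto simp: emeasure_lborel_Icc_eq)
    also have "\<dots> = ennreal (27/2 * r) * indicator {u..1/3} r"
    proof (cases "u < r \<and> r < 1/3")
      case True
      then have "ennreal (range_dens r) * ennreal (1/3 - r) = ennreal (27/2 * r)"
        using assms by (simp add: ennreal_mult''[symmetric] range_dens_mult del: ennreal_mult_left_cong)
      then show ?thesis
        using True by (simp add: indicator_def)
    next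
      case False
      then show ?thesis
        using that assms by (auto simp: indicator_def)
    qed
    finally show ?thesis .
  qed
  have "(\<integral>\<^sup>+r. \<integral>\<^sup>+y. ennreal (range_dens r) * indicator {u<..} r * indicator {r-u..1/3-u} y \<partial>lborel \<partial>lborel)
      = (\<integral>\<^sup>+r. ennreal (27/2 * r) * indicator {u..1/3} r \<partial>lborel)"
    using AE_lborel_singleton[of u] AE_lborel_singleton[of "1/3"]
    by (intro nn_integral_cong_AE) (auto elim!: AE_mp simp: inner)
  also have "\<dots> = ennreal (27/4 * (1/3)\<^sup>2 - 27/4 * u\<^sup>2)"
    using assms
    by (intro nn_integral_FTC_Icc[where F="\<lambda>t. 27/4 * t\<^sup>2"]) (auto intro!: derivative_eq_intros)
  finally show ?thesis by (simp add: algebra_simps)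
qed

definition h_dens :: "real \<times> real \<times> real \<Rightarrow> ennreal" where
  "h_dens p = indicator cube3 p * ennreal (h_fun p)"

lemma h_measure_density: "h_measure = density lborel h_dens"
  unfolding h_measure_def h_dens_def[abs_def] by simp

lemma h_dens_eq: "h_dens (x, y, z) =
    (if 0 \<le> x \<and> x \<le> 1/3 \<and> 0 \<le> y \<and> y \<le> 1/3 \<and> 0 \<le> z \<and> z \<le> 1/3
     then ennreal (s_fun (\<bar>x - y\<bar> + \<bar>y - z\<bar> + \<bar>z - x\<bar>)) else 0)"
  by (simp add: h_dens_def cube3_def h_fun_def indicator_def)

lemma borel_measurable_h_dens[measurable]: "h_dens \<in> borel_measurable (borel \<Otimes>\<^sub>M (borel \<Otimes>\<^sub>M borel))"
proof -
  have eq: "h_dens = (\<lambda>(x, y, z). if 0 \<le> x \<and> x \<le> 1/3 \<and> 0 \<le> y \<and> y \<le> 1/3 \<and> 0 \<le> z \<and> z \<le> 1/3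
      then ennreal (s_fun (\<bar>x - y\<bar> + \<bar>y - z\<bar> + \<bar>z - x\<bar>)) else 0)"
    by (auto simp: h_dens_eq fun_eq_iff)
  show ?thesis unfolding eq s_fun_def by measurable
qed

lemma h_dens_swap12: "h_dens (x, y, z) = h_dens (y, x, z)"
  by (simp add: h_dens_eq abs_minus_commute) (auto simp: algebra_simps abs_minus_commute)

lemma h_dens_swap23: "h_dens (x, y, z) = h_dens (x, z, y)"
  by (simp add: h_dens_eq abs_minus_commute) (auto simp: algebra_simps abs_minus_commute)

lemma h_dens_slice_split:
  assumes "0 \<le> u" "u < 1/3"
  shows "h_dens (u + y, y, z) =
       indicator {0..1/3-u} y * indicator {0..<y} z * ennreal (range_dens (u + y - z))
     + indicator {0..1/3-u} y * indicator {y..y+u} z * ennreal (range_dens u)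
     + indicator {0..1/3-u} y * indicator {y+u<..1/3} z * ennreal (range_dens (z - y))"
proof (cases "0 \<le> y \<and> y \<le> 1/3 - u")
  case False
  then show ?thesis using assms by (auto simp: h_dens_eq indicator_def)
next
  case y: True
  consider "z < 0" | "0 \<le> z \<and> z < y" | "y \<le> z \<and> z \<le> y + u" | "y + u < z \<and> z \<le> 1/3" | "1/3 < z"
    by linarith
  then show ?thesis
  proof cases
    case 2
    have range: "\<bar>u + y - y\<bar> + \<bar>y - z\<bar> + \<bar>z - (u + y)\<bar> = 2 * (u + y - z)" using 2 assms by auto
    have "h_dens (u + y, y, z) = ennreal (range_dens (u + y - z))"
      unfolding h_dens_eq range s_fun_double using 2 y assms by simp
    then show ?thesis using 2 y assms by (simp add: indicator_def)
  next
    case 3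
    have range: "\<bar>u + y - y\<bar> + \<bar>y - z\<bar> + \<bar>z - (u + y)\<bar> = 2 * u" using 3 assms by auto
    have "h_dens (u + y, y, z) = ennreal (range_dens u)"
      unfolding h_dens_eq range s_fun_double using 3 y assms by simp
    then show ?thesis using 3 y assms by (simp add: indicator_def)
  next
    case 4
    have range: "\<bar>u + y - y\<bar> + \<bar>y - z\<bar> + \<bar>z - (u + y)\<bar> = 2 * (z - y)" using 4 assms by auto
    have "h_dens (u + y, y, z) = ennreal (range_dens (z - y))"
      unfolding h_dens_eq range s_fun_double using 4 y assms by simp
    then show ?thesis using 4 y assms by (simp add: indicator_def)
  qed (use y assms in \<open>auto simp: h_dens_eq indicator_def\<close>)
qed

lemma nn_integral_slice_below:
  assumes "0 \<le> u" "u < 1/3"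
  shows "(\<integral>\<^sup>+y. \<integral>\<^sup>+z. indicator {0..1/3-u} y * indicator {0..<y} z * ennreal (range_dens (u + y - z))
      \<partial>lborel \<partial>lborel) = ennreal (27/4 * ((1/3)\<^sup>2 - u\<^sup>2))"
proof -
  have "(\<integral>\<^sup>+z. indicator {0..1/3-u} y * indicator {0..<y} z * ennreal (range_dens (u + y - z)) \<partial>lborel)
      = (\<integral>\<^sup>+r. indicator {0..1/3-u} y * indicator {u<..u+y} r * ennreal (range_dens r) \<partial>lborel)" for y
    by (subst nn_integral_real_affine[where c="-1" and t="u + y"])
      (auto intro!: nn_integral_cong simp: indicator_def)
  then have "(\<integral>\<^sup>+y. \<integral>\<^sup>+z. indicator {0..1/3-u} y * indicator {0..<y} z * ennreal (range_dens (u + y - z))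
      \<partial>lborel \<partial>lborel)
      = (\<integral>\<^sup>+y. \<integral>\<^sup>+r. indicator {0..1/3-u} y * indicator {u<..u+y} r * ennreal (range_dens r) \<partial>lborel \<partial>lborel)"
    by simp
  also have "\<dots> = (\<integral>\<^sup>+r. \<integral>\<^sup>+y. indicator {0..1/3-u} y * indicator {u<..u+y} r * ennreal (range_dens r)
      \<partial>lborel \<partial>lborel)"
    by (rule nn_integral_lborel_swap) measurable
  also have "\<dots> = (\<integral>\<^sup>+r. \<integral>\<^sup>+y. ennreal (range_dens r) * indicator {u<..} r * indicator {r-u..1/3-u} y
      \<partial>lborel \<partial>lborel)"
    using assms by (auto intro!: nn_integral_cong simp: indicator_def)
  also have "\<dots> = ennreal (27/4 * ((1/3)\<^sup>2 - u\<^sup>2))"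
    by (rule nn_integral_range_dens[OF assms])
  finally show ?thesis .
qed

lemma nn_integral_slice_between:
  assumes "0 \<le> u" "u < 1/3"
  shows "(\<integral>\<^sup>+y. \<integral>\<^sup>+z. indicator {0..1/3-u} y * indicator {y..y+u} z * ennreal (range_dens u)
      \<partial>lborel \<partial>lborel) = ennreal (27/2 * u\<^sup>2)"
proof -
  have dens: "0 \<le> range_dens u * u"
    using assms by (simp add: range_dens_nonneg)
  have "(\<integral>\<^sup>+z. indicator {0..1/3-u} y * indicator {y..y+u} z * ennreal (range_dens u) \<partial>lborel)
      = ennreal (range_dens u * u) * indicator {0..1/3-u} y" for y
  proof -
    have "(\<integral>\<^sup>+z. indicator {0..1/3-u} y * indicator {y..y+u} z * ennreal (range_dens u) \<partial>lborel)
        = (\<integral>\<^sup>+z. (indicator {0..1/3-u} y * ennreal (range_dens u)) * indicator {y..y+u} z \<partial>lborel)"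
      by (auto intro!: nn_integral_cong simp: mult_ac)
    also have "\<dots> = indicator {0..1/3-u} y * (ennreal (range_dens u) * ennreal u)"
      using assms by (subst nn_integral_cmult_indicator) (auto simp: mult_ac)
    finally show ?thesis
      using assms range_dens_nonneg[OF assms] by (simp add: ennreal_mult mult_ac)
  qed
  then have "(\<integral>\<^sup>+y. \<integral>\<^sup>+z. indicator {0..1/3-u} y * indicator {y..y+u} z * ennreal (range_dens u)
      \<partial>lborel \<partial>lborel) = ennreal (range_dens u * u) * ennreal (1/3 - u)"
    using assms by (simp add: nn_integral_cmult_indicator)
  also have "\<dots> = ennreal (range_dens u * (1/3 - u) * u)"
    using assms dens by (simp add: ennreal_mult''[symmetric] mult_ac del: ennreal_mult_left_cong)
  also have "\<dots> = ennreal (27/2 * u\<^sup>2)"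
    by (simp only: range_dens_mult[OF assms(2)] power2_eq_square mult.assoc)
  finally show ?thesis .
qed

lemma nn_integral_slice_above:
  assumes "0 \<le> u" "u < 1/3"
  shows "(\<integral>\<^sup>+y. \<integral>\<^sup>+z. indicator {0..1/3-u} y * indicator {y+u<..1/3} z * ennreal (range_dens (z - y))
      \<partial>lborel \<partial>lborel) = ennreal (27/4 * ((1/3)\<^sup>2 - u\<^sup>2))"
proof -
  have "(\<integral>\<^sup>+z. indicator {0..1/3-u} y * indicator {y+u<..1/3} z * ennreal (range_dens (z - y)) \<partial>lborel)
      = (\<integral>\<^sup>+r. indicator {0..1/3-u} y * indicator {u<..1/3-y} r * ennreal (range_dens r) \<partial>lborel)" for y
    by (subst nn_integral_real_affine[where c=1 and t=y]) (auto intro!: nn_integral_cong simp: indicator_def)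
  then have "(\<integral>\<^sup>+y. \<integral>\<^sup>+z. indicator {0..1/3-u} y * indicator {y+u<..1/3} z * ennreal (range_dens (z - y))
      \<partial>lborel \<partial>lborel)
      = (\<integral>\<^sup>+y. \<integral>\<^sup>+r. indicator {0..1/3-u} y * indicator {u<..1/3-y} r * ennreal (range_dens r) \<partial>lborel \<partial>lborel)"
    by simp
  also have "\<dots> = (\<integral>\<^sup>+r. \<integral>\<^sup>+y. indicator {0..1/3-u} y * indicator {u<..1/3-y} r * ennreal (range_dens r)
      \<partial>lborel \<partial>lborel)"
    by (rule nn_integral_lborel_swap) measurable
  also have "\<dots> = (\<integral>\<^sup>+r. \<integral>\<^sup>+y. ennreal (range_dens r) * indicator {u<..} r * indicator {0..1/3-r} y
      \<partial>lborel \<partial>lborel)"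
    using assms by (auto intro!: nn_integral_cong simp: indicator_def)
  also have "\<dots> = (\<integral>\<^sup>+r. \<integral>\<^sup>+y. ennreal (range_dens r) * indicator {u<..} r * indicator {r-u..1/3-u} y
      \<partial>lborel \<partial>lborel)"
    by (rule nn_integral_cong) (simp add: nn_integral_cmult_indicator emeasure_lborel_Icc_eq)
  also have "\<dots> = ennreal (27/4 * ((1/3)\<^sup>2 - u\<^sup>2))"
    by (rule nn_integral_range_dens[OF assms])
  finally show ?thesis .
qed

lemma nn_integral_h_dens_slice_nonneg:
  assumes "0 \<le> u" "u < 1/3"
  shows "(\<integral>\<^sup>+y. \<integral>\<^sup>+z. h_dens (u + y, y, z) \<partial>lborel \<partial>lborel) = ennreal (3/2)"
proof -
  have "(\<integral>\<^sup>+y. \<integral>\<^sup>+z. h_dens (u + y, y, z) \<partial>lborel \<partial>lborel)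
      = (\<integral>\<^sup>+y. \<integral>\<^sup>+z. indicator {0..1/3-u} y * indicator {0..<y} z * ennreal (range_dens (u + y - z))
          \<partial>lborel \<partial>lborel)
      + (\<integral>\<^sup>+y. \<integral>\<^sup>+z. indicator {0..1/3-u} y * indicator {y..y+u} z * ennreal (range_dens u)
          \<partial>lborel \<partial>lborel)
      + (\<integral>\<^sup>+y. \<integral>\<^sup>+z. indicator {0..1/3-u} y * indicator {y+u<..1/3} z * ennreal (range_dens (z - y))
          \<partial>lborel \<partial>lborel)"
  proof -
    have "(\<integral>\<^sup>+z. h_dens (u + y, y, z) \<partial>lborel)
        = (\<integral>\<^sup>+z. indicator {0..1/3-u} y * indicator {0..<y} z * ennreal (range_dens (u + y - z)) \<partial>lborel)
        + (\<integral>\<^sup>+z. indicator {0..1/3-u} y * indicator {y..y+u} z * ennreal (range_dens u) \<partial>lborel)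
        + (\<integral>\<^sup>+z. indicator {0..1/3-u} y * indicator {y+u<..1/3} z * ennreal (range_dens (z - y)) \<partial>lborel)"
      for y
      by (simp only: h_dens_slice_split[OF assms]) (subst nn_integral_add, measurable)+
    then show ?thesis
      by simp (subst nn_integral_add, measurable)+
  qed
  also have "\<dots> = ennreal (27/4 * ((1/3)\<^sup>2 - u\<^sup>2)) + ennreal (27/2 * u\<^sup>2) + ennreal (27/4 * ((1/3)\<^sup>2 - u\<^sup>2))"
    by (simp only: nn_integral_slice_below[OF assms] nn_integral_slice_between[OF assms]
        nn_integral_slice_above[OF assms])
  also have "\<dots> = ennreal (3/2)"
  proof -
    have "u\<^sup>2 \<le> (1/3)\<^sup>2"
      using assms by (intro power_mono) auto
    then show ?thesis
      by (simp add: ennreal_plus[symmetric] del: ennreal_plus) (simp add: field_simps power2_eq_square)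
  qed
  finally show ?thesis .
qed

lemma nn_integral_h_dens_slice:
  assumes "u \<noteq> 1/3" "u \<noteq> -1/3"
  shows "(\<integral>\<^sup>+y. \<integral>\<^sup>+z. h_dens (u + y, y, z) \<partial>lborel \<partial>lborel) = ennreal (3/2) * indicator {-1/3<..<1/3} u"
proof -
  consider "0 \<le> u \<and> u < 1/3" | "-1/3 < u \<and> u < 0" | "1/3 < \<bar>u\<bar>"
    using assms by linarith
  then show ?thesis
  proof cases
    case 1
    then show ?thesis using nn_integral_h_dens_slice_nonneg[of u] by (simp add: indicator_def)
  next
    case 2
    have "(\<integral>\<^sup>+y. \<integral>\<^sup>+z. h_dens (u + y, y, z) \<partial>lborel \<partial>lborel)
        = (\<integral>\<^sup>+y. \<integral>\<^sup>+z. h_dens (u + (-u + 1 * y), -u + 1 * y, z) \<partial>lborel \<partial>lborel)"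
      by (subst nn_integral_real_affine[where c=1 and t="-u"]) auto
    also have "\<dots> = (\<integral>\<^sup>+y. \<integral>\<^sup>+z. h_dens (-u + y, y, z) \<partial>lborel \<partial>lborel)"
      by (intro nn_integral_cong) (simp, rule h_dens_swap12)
    also have "\<dots> = ennreal (3/2)"
      using 2 by (intro nn_integral_h_dens_slice_nonneg) auto
    finally show ?thesis using 2 by (simp add: indicator_def)
  next
    case 3
    then have "h_dens (u + y, y, z) = 0" for y z
      by (auto simp: h_dens_eq)
    then show ?thesis using 3 by (auto simp: indicator_def)
  qed
qed

lemma nn_integral_h_dens_diff12:
  assumes [measurable]: "A \<in> sets borel"
  shows "(\<integral>\<^sup>+x. \<integral>\<^sup>+y. \<integral>\<^sup>+z. h_dens (x, y, z) * indicator A (x - y) \<partial>lborel \<partial>lborel \<partial>lborel)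
       = ennreal (3/2) * emeasure lborel (A \<inter> {-1/3<..<1/3})"
proof -
  have "(\<integral>\<^sup>+x. \<integral>\<^sup>+y. \<integral>\<^sup>+z. h_dens (x, y, z) * indicator A (x - y) \<partial>lborel \<partial>lborel \<partial>lborel)
      = (\<integral>\<^sup>+y. \<integral>\<^sup>+x. \<integral>\<^sup>+z. h_dens (x, y, z) * indicator A (x - y) \<partial>lborel \<partial>lborel \<partial>lborel)"
    by (rule nn_integral_lborel_triple_swap12[where F="\<lambda>(x, y, z). h_dens (x, y, z) * indicator A (x - y)",
          simplified]) measurable
  also have "\<dots> = (\<integral>\<^sup>+y. \<integral>\<^sup>+u. \<integral>\<^sup>+z. h_dens (y + u, y, z) * indicator A u \<partial>lborel \<partial>lborel \<partial>lborel)"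
  proof (rule nn_integral_cong)
    fix y
    show "(\<integral>\<^sup>+x. \<integral>\<^sup>+z. h_dens (x, y, z) * indicator A (x - y) \<partial>lborel \<partial>lborel)
        = (\<integral>\<^sup>+u. \<integral>\<^sup>+z. h_dens (y + u, y, z) * indicator A u \<partial>lborel \<partial>lborel)"
      by (subst nn_integral_real_affine[where c=1 and t=y]) auto
  qed
  also have "\<dots> = (\<integral>\<^sup>+u. \<integral>\<^sup>+y. \<integral>\<^sup>+z. h_dens (y + u, y, z) * indicator A u \<partial>lborel \<partial>lborel \<partial>lborel)"
    by (rule nn_integral_lborel_triple_swap12[where F="\<lambda>(y, u, z). h_dens (y + u, y, z) * indicator A u",
          simplified]) measurable
  also have "\<dots> = (\<integral>\<^sup>+u. (\<integral>\<^sup>+y. \<integral>\<^sup>+z. h_dens (u + y, y, z) \<partial>lborel \<partial>lborel) * indicator A u \<partial>lborel)"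
    by (simp add: nn_integral_multc add.commute)
  also have "\<dots> = (\<integral>\<^sup>+u. ennreal (3/2) * indicator (A \<inter> {-1/3<..<1/3}) u \<partial>lborel)"
    using AE_lborel_singleton[of "1/3::real"] AE_lborel_singleton[of "-1/3::real"]
    by (intro nn_integral_cong_AE) (auto elim!: AE_mp simp: nn_integral_h_dens_slice indicator_def)
  also have "\<dots> = ennreal (3/2) * emeasure lborel (A \<inter> {-1/3<..<1/3})"
    by (rule nn_integral_cmult_indicator) simp
  finally show ?thesis .
qed

lemma sets_h_measure[measurable_cong]: "sets h_measure = sets (borel \<Otimes>\<^sub>M (borel \<Otimes>\<^sub>M borel))"
  by (simp add: h_measure_density) (simp only: borel_prod)

lemma space_h_measure[simp]: "space h_measure = UNIV"
  by (simp add: h_measure_density)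

lemma emeasure_h_measure_pred:
  assumes [measurable]: "A \<in> sets borel" "g \<in> borel_measurable (borel \<Otimes>\<^sub>M (borel \<Otimes>\<^sub>M borel))"
  shows "emeasure h_measure {p. g p \<in> A}
       = (\<integral>\<^sup>+x. \<integral>\<^sup>+y. \<integral>\<^sup>+z. h_dens (x, y, z) * indicator A (g (x, y, z)) \<partial>lborel \<partial>lborel \<partial>lborel)"
proof -
  have "{p. g p \<in> A} \<in> sets (borel \<Otimes>\<^sub>M (borel \<Otimes>\<^sub>M borel))"
    using measurable_sets[OF assms(2,1)] by (simp add: space_pair_measure vimage_def)
  then have "{p. g p \<in> A} \<in> sets lborel"
    by (simp only: borel_prod sets_lborel)
  moreover have "h_dens \<in> borel_measurable lborel"
    using borel_measurable_h_dens by (simp add: borel_prod)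
  ultimately have "emeasure h_measure {p. g p \<in> A} = (\<integral>\<^sup>+p. h_dens p * indicator A (g p) \<partial>lborel)"
    unfolding h_measure_density
    by (subst emeasure_density) (auto intro!: nn_integral_cong simp: indicator_def)
  also have "\<dots> = (\<integral>\<^sup>+x. \<integral>\<^sup>+y. \<integral>\<^sup>+z. h_dens (x, y, z) * indicator A (g (x, y, z)) \<partial>lborel \<partial>lborel \<partial>lborel)"
    by (rule nn_integral_lborel_triple) (simp add: borel_prod[symmetric])
  finally show ?thesis .
qed

definition uniform_under_h :: "(real \<times> real \<times> real \<Rightarrow> real) \<Rightarrow> bool" where
  "uniform_under_h g \<longleftrightarrow> g \<in> borel_measurable h_measure \<and> (\<forall>A \<in> sets borel.
     emeasure h_measure {p. g p \<in> A} = ennreal (3/2) * emeasure lborel (A \<inter> {-1/3<..<1/3}))"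

lemma uniform_under_hD:
  "uniform_under_h g \<Longrightarrow> A \<in> sets borel \<Longrightarrow>
    emeasure h_measure {p. g p \<in> A} = ennreal (3/2) * emeasure lborel (A \<inter> {-1/3<..<1/3})"
  by (simp add: uniform_under_h_def)

lemma uniform_under_h_measurable:
  "uniform_under_h g \<Longrightarrow> g \<in> borel_measurable h_measure"
  by (simp add: uniform_under_h_def)

lemma uniform_under_h_diff12: "uniform_under_h (\<lambda>p. fst p - fst (snd p))"
  unfolding uniform_under_h_def
  by (intro conjI ballI, measurable) (simp add: emeasure_h_measure_pred nn_integral_h_dens_diff12)

lemma uniform_under_h_diff23: "uniform_under_h (\<lambda>p. fst (snd p) - snd (snd p))"
  unfolding uniform_under_h_def
proof (intro conjI ballI)
  show "(\<lambda>p. fst (snd p) - snd (snd p)) \<in> borel_measurable h_measure"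
    by measurable
  fix A :: "real set" assume [measurable]: "A \<in> sets borel"
  have "(\<integral>\<^sup>+x. \<integral>\<^sup>+y. \<integral>\<^sup>+z. h_dens (x, y, z) * indicator A (y - z) \<partial>lborel \<partial>lborel \<partial>lborel)
      = (\<integral>\<^sup>+y. \<integral>\<^sup>+x. \<integral>\<^sup>+z. h_dens (x, y, z) * indicator A (y - z) \<partial>lborel \<partial>lborel \<partial>lborel)"
    by (rule nn_integral_lborel_triple_swap12[where F="\<lambda>(x, y, z). h_dens (x, y, z) * indicator A (y - z)",
          simplified]) measurable
  also have "\<dots> = (\<integral>\<^sup>+y. \<integral>\<^sup>+z. \<integral>\<^sup>+x. h_dens (x, y, z) * indicator A (y - z) \<partial>lborel \<partial>lborel \<partial>lborel)"
    by (rule nn_integral_lborel_triple_swap23[where F="\<lambda>(y, x, z). h_dens (x, y, z) * indicator A (y - z)",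
          simplified]) measurable
  also have "\<dots> = (\<integral>\<^sup>+y. \<integral>\<^sup>+z. \<integral>\<^sup>+x. h_dens (y, z, x) * indicator A (y - z) \<partial>lborel \<partial>lborel \<partial>lborel)"
    by (intro nn_integral_cong) (metis h_dens_swap12 h_dens_swap23)
  finally show "emeasure h_measure {p. fst (snd p) - snd (snd p) \<in> A}
      = ennreal (3/2) * emeasure lborel (A \<inter> {-1/3<..<1/3})"
    by (simp add: emeasure_h_measure_pred nn_integral_h_dens_diff12)
qed

lemma uniform_under_h_diff31: "uniform_under_h (\<lambda>p. snd (snd p) - fst p)"
  unfolding uniform_under_h_def
proof (intro conjI ballI)
  show "(\<lambda>p. snd (snd p) - fst p) \<in> borel_measurable h_measure"
    by measurable
  fix A :: "real set" assume [measurable]: "A \<in> sets borel"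
  have "(\<integral>\<^sup>+x. \<integral>\<^sup>+y. \<integral>\<^sup>+z. h_dens (x, y, z) * indicator A (z - x) \<partial>lborel \<partial>lborel \<partial>lborel)
      = (\<integral>\<^sup>+x. \<integral>\<^sup>+z. \<integral>\<^sup>+y. h_dens (x, y, z) * indicator A (z - x) \<partial>lborel \<partial>lborel \<partial>lborel)"
    by (rule nn_integral_lborel_triple_swap23[where F="\<lambda>(x, y, z). h_dens (x, y, z) * indicator A (z - x)",
          simplified]) measurable
  also have "\<dots> = (\<integral>\<^sup>+z. \<integral>\<^sup>+x. \<integral>\<^sup>+y. h_dens (x, y, z) * indicator A (z - x) \<partial>lborel \<partial>lborel \<partial>lborel)"
    by (rule nn_integral_lborel_triple_swap12[where F="\<lambda>(x, z, y). h_dens (x, y, z) * indicator A (z - x)",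
          simplified]) measurable
  also have "\<dots> = (\<integral>\<^sup>+z. \<integral>\<^sup>+x. \<integral>\<^sup>+y. h_dens (z, x, y) * indicator A (z - x) \<partial>lborel \<partial>lborel \<partial>lborel)"
    by (intro nn_integral_cong) (metis h_dens_swap12 h_dens_swap23)
  finally show "emeasure h_measure {p. snd (snd p) - fst p \<in> A}
      = ennreal (3/2) * emeasure lborel (A \<inter> {-1/3<..<1/3})"
    by (simp add: emeasure_h_measure_pred nn_integral_h_dens_diff12)
qed

lemma prob_space_h_measure: "prob_space h_measure"
proof
  have "emeasure h_measure (space h_measure) = emeasure h_measure {p. fst p - fst (snd p) \<in> UNIV}"
    by simp
  also have "\<dots> = ennreal (3/2) * emeasure lborel {-1/3<..<1/3::real}"
    using uniform_under_hD[OF uniform_under_h_diff12, of UNIV] by simp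
  also have "\<dots> = 1"
    by (simp add: ennreal_mult''[symmetric])
  finally show "emeasure h_measure (space h_measure) = 1" .
qed

lemma uniform_under_h_AE_gt:
  assumes "uniform_under_h g"
  shows "AE p in h_measure. -1/3 < g p"
proof -
  have "emeasure h_measure {p. g p \<in> {-1/3<..}} = ennreal (3/2) * emeasure lborel {-1/3<..<1/3::real}"
    using uniform_under_hD[OF assms, of "{-1/3<..}"] by (simp add: Int_absorb1 subset_eq)
  also have "\<dots> = 1"
    by (simp add: ennreal_mult''[symmetric])
  finally have "measure h_measure {p. g p \<in> {-1/3<..}} = 1"
    by (simp add: measure_def)
  then have "AE p in h_measure. p \<in> {p. g p \<in> {-1/3<..}}"
    by (rule prob_space.AE_prob_1[OF prob_space_h_measure])
  then show ?thesis by simp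
qed

lemma uniform_under_h_tail:
  assumes "uniform_under_h g" "0 < n" "0 < c"
  shows "1 - real n * c / 2 \<le> measure h_measure {p. c < 3 / real n * (g p + 1/3)}"
proof -
  define d where "d = real n * c / 3 - 1/3"
  have d_gt: "-1/3 < d"
    unfolding d_def using assms(2,3) by simp
  have "{p. c < 3 / real n * (g p + 1/3)} = {p. g p \<in> {d<..}}"
    using assms unfolding d_def by (auto simp: field_simps)
  then have "measure h_measure {p. c < 3 / real n * (g p + 1/3)}
      = enn2real (ennreal (3/2) * emeasure lborel ({d<..} \<inter> {-1/3<..<1/3}))"
    using uniform_under_hD[OF assms(1), of "{d<..}"] by (simp add: measure_def)
  also have "\<dots> \<ge> 1 - real n * c / 2"
  proof (cases "d < 1/3")
    case True
    moreover have "{d<..} \<inter> {-1/3<..<1/3::real} = {d<..<1/3}"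
      using d_gt by auto
    ultimately show ?thesis
      by (simp add: ennreal_mult''[symmetric] enn2real_mult d_def)
  next
    case False
    then have "{d<..} \<inter> {-1/3<..<1/3::real} = {}"
      by auto
    then show ?thesis
      using False by (simp add: d_def field_simps)
  qed
  finally show ?thesis .
qed

section \<open>The bidding algorithm\<close>

definition even_bids :: "nat \<Rightarrow> real \<Rightarrow> nat \<Rightarrow> real" where
  "even_bids n t = (\<lambda>i\<in>{..<n}. if i < n div 2 then t else 2 / real n - t)"

definition odd_bids :: "nat \<Rightarrow> real \<times> real \<times> real \<times> real \<Rightarrow> nat \<Rightarrow> real" where
  "odd_bids n = (\<lambda>(t, x, y, z). \<lambda>i\<in>{..<n}.
     if i < n div 2 - 1 then t
     else if i < 2 * (n div 2) - 2 then 2 / real n - t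
     else if i = 2 * (n div 2) - 2 then 3 / real n * (x - y + 1/3)
     else if i = 2 * (n div 2) - 1 then 3 / real n * (y - z + 1/3)
     else 3 / real n * (z - x + 1/3))"

lemma alg_B_even: "even n \<Longrightarrow> alg_B n = distr (F2 n) (bid_space n) (even_bids n)"
  by (simp add: alg_B_def even_bids_def[abs_def])

lemma alg_B_odd: "odd n \<Longrightarrow> alg_B n = distr (F2 n \<Otimes>\<^sub>M h_measure) (bid_space n) (odd_bids n)"
  by (simp add: alg_B_def odd_bids_def)

lemma measurable_even_bids: "even_bids n \<in> F2 n \<rightarrow>\<^sub>M bid_space n"
  unfolding even_bids_def[abs_def] bid_space_def by measurable

lemma measurable_odd_bids: "odd_bids n \<in> F2 n \<Otimes>\<^sub>M h_measure \<rightarrow>\<^sub>M bid_space n"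
  unfolding odd_bids_def bid_space_def by measurable

lemma pred_valid_bid[measurable]: "Measurable.pred (bid_space n) (valid_bid n)"
  unfolding valid_bid_def bid_space_def by measurable

lemma sum_lessThan_double_if: "(\<Sum>i<2*m. if i < m then a else b) = real m * a + real m * (b::real)"
proof -
  have split: "{..<2*m} = {..<m} \<union> {m..<2*m}"
    by auto
  have "(\<Sum>i<2*m. if i < m then a else b) = (\<Sum>i\<in>{..<m} \<union> {m..<2*m}. if i < m then a else b)"
    by (simp only: split)
  also have "\<dots> = (\<Sum>i<m. if i < m then a else b) + (\<Sum>i\<in>{m..<2*m}. if i < m then a else b)"
    by (rule sum.union_disjoint) auto
  also have "\<dots> = (\<Sum>i<m. a) + (\<Sum>i\<in>{m..<2*m}. b)"
    by (intro arg_cong2[where f="(+)"] sum.cong) auto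
  finally show ?thesis by simp
qed

lemma valid_even_bids:
  assumes "even n" "0 < n" "0 < t" "t < 2 / real n"
  shows "valid_bid n (even_bids n t)"
proof -
  obtain m where m: "n = 2 * m"
    using assms(1) by blast
  have "(\<Sum>i<n. even_bids n t i) = (\<Sum>i<2*m. if i < m then t else 2 / real n - t)"
    unfolding m even_bids_def by (intro sum.cong) (auto simp: m)
  also have "\<dots> = real m * (2 / real n)"
    by (subst sum_lessThan_double_if) (simp add: algebra_simps)
  also have "\<dots> = 1"
    using m assms(2) by simp
  finally show ?thesis
    unfolding valid_bid_def using assms(3,4) by (auto simp: even_bids_def)
qed

lemma valid_odd_bids:
  assumes n: "n = 2 * k + 3" and "0 < t" "t < 2 / real n"
    and "-1/3 < x - y" "-1/3 < y - z" "-1/3 < z - x"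
  shows "valid_bid n (odd_bids n (t, x, y, z))"
proof -
  have half: "n div 2 = k + 1"
    using n by simp
  have "(\<Sum>i<n. odd_bids n (t, x, y, z) i) = (\<Sum>i<2*k. odd_bids n (t, x, y, z) i)
      + odd_bids n (t, x, y, z) (2*k) + odd_bids n (t, x, y, z) (2*k+1) + odd_bids n (t, x, y, z) (2*k+2)"
    unfolding n by (simp add: numeral_3_eq_3)
  also have "(\<Sum>i<2*k. odd_bids n (t, x, y, z) i) = (\<Sum>i<2*k. if i < k then t else 2 / real n - t)"
    by (intro sum.cong) (auto simp: odd_bids_def half n)
  also have "\<dots> + odd_bids n (t, x, y, z) (2*k) + odd_bids n (t, x, y, z) (2*k+1)
      + odd_bids n (t, x, y, z) (2*k+2) = real k * (2 / real n) + 3 / real n * 1"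
    unfolding sum_lessThan_double_if odd_bids_def half
    by (simp add: n algebra_simps add_divide_distrib[symmetric])
  also have "\<dots> = 1"
    using n by (simp add: field_simps del: of_nat_add)
  finally show ?thesis
    using assms by (auto simp: valid_bid_def odd_bids_def half)
qed

lemma odd_ge_2_obtain:
  fixes n :: nat
  assumes "odd n" "2 \<le> n"
  obtains k where "n = 2 * k + 3"
proof -
  obtain j where "n = 2 * j + 1"
    using assms(1) by (rule oddE)
  with assms(2) show thesis
    by (intro that[of "j - 1"]) simp
qed

lemma rand_strategy_distr:
  assumes "prob_space M" "f \<in> M \<rightarrow>\<^sub>M bid_space n" "AE x in M. valid_bid n (f x)"
  shows "rand_strategy n (distr M (bid_space n) f)"
  unfolding rand_strategy_def
  using assms by (simp add: prob_space.prob_space_distr AE_distr_iff)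

lemma AE_valid_odd_bids:
  assumes n: "n = 2 * k + 3"
  shows "AE p in F2 n \<Otimes>\<^sub>M h_measure. valid_bid n (odd_bids n p)"
proof -
  have "0 < n"
    using n by simp
  interpret pair_prob_space "F2 n" h_measure
    using prob_space_F2[OF \<open>0 < n\<close>] prob_space_h_measure
    by (simp add: pair_prob_space_def pair_sigma_finite_def prob_space_imp_sigma_finite)
  have diffs: "AE q in h_measure.
      -1/3 < fst q - fst (snd q) \<and> -1/3 < fst (snd q) - snd (snd q) \<and> -1/3 < snd (snd q) - fst q"
    using uniform_under_h_AE_gt[OF uniform_under_h_diff12] uniform_under_h_AE_gt[OF uniform_under_h_diff23]
      uniform_under_h_AE_gt[OF uniform_under_h_diff31]
    by eventually_elim simp
  have "AE t in F2 n. AE q in h_measure. valid_bid n (odd_bids n (t, q))"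
    using AE_F2[OF \<open>0 < n\<close>]
  proof eventually_elim
    case (elim t)
    show ?case
      using diffs
    proof eventually_elim
      case (elim q)
      then show ?case
        using \<open>0 < t \<and> t < 2 / real n\<close> valid_odd_bids[OF n] by (cases q) auto
    qed
  qed
  moreover have "Measurable.pred (F2 n \<Otimes>\<^sub>M h_measure) (\<lambda>p. valid_bid n (odd_bids n p))"
    using measurable_compose[OF measurable_odd_bids pred_valid_bid] by (simp add: comp_def)
  ultimately show ?thesis
    by (intro AE_pair_measure) (simp_all add: pred_def)
qed

theorem rand_strategy_alg_B:
  assumes "2 \<le> n"
  shows "rand_strategy n (alg_B n)"
proof (cases "even n")
  case True
  have "0 < n"
    using assms by simp
  have "AE t in F2 n. valid_bid n (even_bids n t)"
    using AE_F2[OF \<open>0 < n\<close>] by eventually_elim (use True \<open>0 < n\<close> in \<open>auto intro: valid_even_bids\<close>)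
  then show ?thesis
    unfolding alg_B_even[OF True]
    by (intro rand_strategy_distr prob_space_F2 measurable_even_bids \<open>0 < n\<close>)
next
  case False
  then obtain k where n: "n = 2 * k + 3"
    using assms by (rule odd_ge_2_obtain)
  then show ?thesis
    unfolding alg_B_odd[OF False]
    by (intro rand_strategy_distr prob_space_pair prob_space_F2 prob_space_h_measure measurable_odd_bids
        AE_valid_odd_bids) simp_all
qed

lemma measure_distr_bid_gt:
  assumes f: "f \<in> M \<rightarrow>\<^sub>M bid_space n" and "i < n"
  shows "measure (distr M (bid_space n) f) {b \<in> space (distr M (bid_space n) f). c < b i}
       = measure M {x \<in> space M. c < f x i}"
proof -
  have "{b \<in> space (bid_space n). c < b i} \<in> sets (bid_space n)"
    unfolding bid_space_def by measurable (use \<open>i < n\<close> in simp)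
  then have "measure (distr M (bid_space n) f) {b \<in> space (distr M (bid_space n) f). c < b i}
      = measure M (f -` {b \<in> space (bid_space n). c < b i} \<inter> space M)"
    by (simp add: measure_distr[OF f])
  also have "f -` {b \<in> space (bid_space n). c < b i} \<inter> space M = {x \<in> space M. c < f x i}"
    using measurable_space[OF f] by auto
  finally show ?thesis .
qed

lemma bids_dominate_uniform_alg_B_even:
  assumes "even n" "0 < n"
  shows "bids_dominate_uniform n (alg_B n)"
  unfolding bids_dominate_uniform_def
proof (intro allI impI)
  fix i and c :: real
  assume "i < n" "0 < c"
  have "measure (alg_B n) {b \<in> space (alg_B n). c < b i} = measure (F2 n) {t. c < even_bids n t i}"
    unfolding alg_B_even[OF assms(1)] measure_distr_bid_gt[OF measurable_even_bids \<open>i < n\<close>] by simp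
  moreover have "1 - real n * c / 2 \<le> measure (F2 n) {t. c < even_bids n t i}"
  proof (cases "i < n div 2")
    case True
    then show ?thesis
      using F2_gt[OF assms(2) \<open>0 < c\<close>] \<open>i < n\<close> by (simp add: even_bids_def)
  next
    case False
    then show ?thesis
      using F2_reflect_gt[OF assms(2) \<open>0 < c\<close>] \<open>i < n\<close> by (simp add: even_bids_def)
  qed
  ultimately show "1 - real n * c / 2 \<le> measure (alg_B n) {b \<in> space (alg_B n). c < b i}"
    by simp
qed

lemma measure_pair_Times:
  assumes "prob_space M1" "prob_space M2" "A \<in> sets M1" "B \<in> sets M2"
  shows "measure (M1 \<Otimes>\<^sub>M M2) (A \<times> B) = measure M1 A * measure M2 B"
proof -
  interpret pair_sigma_finite M1 M2
    using assms(1,2) by (simp add: pair_sigma_finite_def prob_space_imp_sigma_finite)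
  show ?thesis
    unfolding measure_def by (simp add: M2.emeasure_pair_measure_Times assms enn2real_mult)
qed

lemma measure_F2_h_Times_UNIV:
  assumes "0 < n" "A \<in> sets borel"
  shows "measure (F2 n \<Otimes>\<^sub>M h_measure) (A \<times> UNIV) = measure (F2 n) A"
  using assms prob_space.prob_space[OF prob_space_h_measure] sets.top[of h_measure]
  by (subst measure_pair_Times[OF prob_space_F2[OF assms(1)] prob_space_h_measure]) (simp_all add: sets_F2)

lemma uniform_under_h_tail_F2_h:
  assumes "uniform_under_h g" "0 < n" "0 < c"
  shows "1 - real n * c / 2 \<le> measure (F2 n \<Otimes>\<^sub>M h_measure) (UNIV \<times> {q. c < 3 / real n * (g q + 1/3)})"
proof -
  note uniform_under_h_measurable[OF assms(1), measurable]
  have "Measurable.pred h_measure (\<lambda>q. c < 3 / real n * (g q + 1/3))"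
    by measurable
  then have "{q. c < 3 / real n * (g q + 1/3)} \<in> sets h_measure"
    by (simp add: pred_def)
  then have "measure (F2 n \<Otimes>\<^sub>M h_measure) (UNIV \<times> {q. c < 3 / real n * (g q + 1/3)})
      = measure h_measure {q. c < 3 / real n * (g q + 1/3)}"
    using prob_space.prob_space[OF prob_space_F2[OF \<open>0 < n\<close>]] sets.top[of "F2 n"]
    by (subst measure_pair_Times[OF prob_space_F2[OF \<open>0 < n\<close>] prob_space_h_measure]) simp_all
  then show ?thesis
    using uniform_under_h_tail[OF assms] by simp
qed

lemma bids_dominate_uniform_alg_B_odd:
  assumes n: "n = 2 * k + 3"
  shows "bids_dominate_uniform n (alg_B n)"
  unfolding bids_dominate_uniform_def
proof (intro allI impI)
  fix i and c :: real
  assume "i < n" "0 < c"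
  have "odd n" "0 < n" and half: "n div 2 = k + 1"
    using n by simp_all
  let ?M = "F2 n \<Otimes>\<^sub>M h_measure"
  have "measure (alg_B n) {b \<in> space (alg_B n). c < b i} = measure ?M {p. c < odd_bids n p i}"
    unfolding alg_B_odd[OF \<open>odd n\<close>] measure_distr_bid_gt[OF measurable_odd_bids \<open>i < n\<close>]
    by (simp add: space_pair_measure)
  moreover consider "i < k" | "k \<le> i \<and> i < 2 * k" | "i = 2 * k" | "i = 2 * k + 1" | "i = 2 * k + 2"
    using \<open>i < n\<close> n by linarith
  then have "1 - real n * c / 2 \<le> measure ?M {p. c < odd_bids n p i}"
  proof cases
    case 1
    then have "{p. c < odd_bids n p i} = {t. c < t} \<times> UNIV"
      using \<open>i < n\<close> by (auto simp: odd_bids_def half)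
    then show ?thesis
      using F2_gt[OF \<open>0 < n\<close> \<open>0 < c\<close>] measure_F2_h_Times_UNIV[OF \<open>0 < n\<close>, of "{t. c < t}"] by simp
  next
    case 2
    then have "{p. c < odd_bids n p i} = {t. c < 2 / real n - t} \<times> UNIV"
      using \<open>i < n\<close> by (auto simp: odd_bids_def half)
    then show ?thesis
      using F2_reflect_gt[OF \<open>0 < n\<close> \<open>0 < c\<close>] measure_F2_h_Times_UNIV[OF \<open>0 < n\<close>, of "{t. c < 2 / real n - t}"]
      by simp
  next
    case 3
    then have "{p. c < odd_bids n p i} = UNIV \<times> {q. c < 3 / real n * (fst q - fst (snd q) + 1/3)}"
      using \<open>i < n\<close> by (auto simp: odd_bids_def half)
    then show ?thesis
      using uniform_under_h_tail_F2_h[OF uniform_under_h_diff12 \<open>0 < n\<close> \<open>0 < c\<close>] by simp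
  next
    case 4
    then have "{p. c < odd_bids n p i} = UNIV \<times> {q. c < 3 / real n * (fst (snd q) - snd (snd q) + 1/3)}"
      using \<open>i < n\<close> by (auto simp: odd_bids_def half)
    then show ?thesis
      using uniform_under_h_tail_F2_h[OF uniform_under_h_diff23 \<open>0 < n\<close> \<open>0 < c\<close>] by simp
  next
    case 5
    then have "{p. c < odd_bids n p i} = UNIV \<times> {q. c < 3 / real n * (snd (snd q) - fst q + 1/3)}"
      using \<open>i < n\<close> n by (auto simp: odd_bids_def half)
    then show ?thesis
      using uniform_under_h_tail_F2_h[OF uniform_under_h_diff31 \<open>0 < n\<close> \<open>0 < c\<close>] by simp
  qed
  ultimately show "1 - real n * c / 2 \<le> measure (alg_B n) {b \<in> space (alg_B n). c < b i}"
    by simp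
qed

theorem theorem2p5:
  fixes n :: nat
  assumes "n \<ge> 2"
  shows "rand_strategy n (alg_B n)
    \<and> (\<forall>MA. rand_strategy n MA \<longrightarrow> exp_wins n (alg_B n) MA \<ge> real n / 2)
    \<and> (\<forall>MB. rand_strategy n MB \<longrightarrow>
          (\<exists>MA. rand_strategy n MA \<and> exp_wins n MB MA \<le> real n / 2))"
proof (intro conjI allI impI)
  show B: "rand_strategy n (alg_B n)"
    using assms by (rule rand_strategy_alg_B)
  have "bids_dominate_uniform n (alg_B n)"
  proof (cases "even n")
    case True
    then show ?thesis
      using assms by (intro bids_dominate_uniform_alg_B_even) simp_all
  next
    case False
    then obtain k where "n = 2 * k + 3"
      using assms by (rule odd_ge_2_obtain)
    then show ?thesis
      by (rule bids_dominate_uniform_alg_B_odd)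
  qed
  then show "real n / 2 \<le> exp_wins n (alg_B n) MA" if "rand_strategy n MA" for MA
    using B that unfolding rand_strategy_def by (intro exp_wins_ge_half) auto
  show "\<exists>MA. rand_strategy n MA \<and> exp_wins n MB MA \<le> real n / 2" if "rand_strategy n MB" for MB
    using that exp_wins_self[of MB n] unfolding rand_strategy_def by auto
qed

end
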